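(* Let $\mathcal D$ be universal, $\mathrm H=(H,d)\in\mathfrak U_{\mathcal D}$, and let $\mathfrak t$ be a Katětov function of $\mathrm H$ with nonempty domain. Let $\mathcal D_{\mathfrak t}=\{n\in\mathcal D: n\le 2\operatorname{rank}(\mathfrak t)\}$. Then $\mathcal D_{\mathfrak t}$ is universal and the subspace of $\mathrm H$ on $\operatorname{orb}(\mathfrak t)$ is isometric to $\mathbf U_{\mathcal D_{\mathfrak t}}$; in particular $\operatorname{orb}(\mathfrak t)$ is infinite.
   Context: $\mathcal D$ is a finite subset of $\mathbb R_{\ge0}$ containing $0$. $\mathfrak U_{\mathcal D}$ is the class of countable homogeneous metric spaces (every isometry between finite subspaces extends to an isometry of the space onto itself) with distance set exactly $\mathcal D$ into which every finite metric space with distances in $\mathcal D$ embeds isometrically; these are all isometric, $\mathbf U_{\mathcal D}$ denotes one of them, and $\mathcal D$ is universal if the class is nonempty. For a metric space $(M,d)$ with distances in $\mathcal D$, a Katětov function is a map $\mathfrak t:F\to\mathcal D\setminus\{0\}$, $F\subseteq M$ finite, with $|\mathfrak t(x)-\mathfrak t(y)|\le d(x,y)\le\mathfrak t(x)+\mathfrak t(y)$ for all $x,y\in F$. Its orbit is $\operatorname{orb}(\mathfrak t)=\{y\in M\setminus F: d(y,x)=\mathfrak t(x)\text{ for all }x\in F\}$ and its rank is $\operatorname{rank}(\mathfrak t)=\min_{x\in F}\mathfrak t(x)$. *)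

theory Defs
  imports Complex_Main "HOL-Library.Countable_Set"
begin

definition metric_on :: "'a set \<Rightarrow> ('a \<Rightarrow> 'a \<Rightarrow> real) \<Rightarrow> bool" where
  "metric_on M d \<longleftrightarrow>
     (\<forall>x\<in>M. \<forall>y\<in>M. d x y \<ge> 0 \<and> (d x y = 0 \<longleftrightarrow> x = y) \<and> d x y = d y x) \<and>
     (\<forall>x\<in>M. \<forall>y\<in>M. \<forall>z\<in>M. d x z \<le> d x y + d y z)"

definition dist_set :: "'a set \<Rightarrow> ('a \<Rightarrow> 'a \<Rightarrow> real) \<Rightarrow> real set" where
  "dist_set M d = {d x y | x y. x \<in> M \<and> y \<in> M}"

definition isometry_onto :: "('a \<Rightarrow> 'b) \<Rightarrow> 'a set \<Rightarrow> ('a \<Rightarrow> 'a \<Rightarrow> real)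
    \<Rightarrow> 'b set \<Rightarrow> ('b \<Rightarrow> 'b \<Rightarrow> real) \<Rightarrow> bool" where
  "isometry_onto f A dA B dB \<longleftrightarrow> bij_betw f A B \<and> (\<forall>x\<in>A. \<forall>y\<in>A. dB (f x) (f y) = dA x y)"

definition isometric :: "'a set \<Rightarrow> ('a \<Rightarrow> 'a \<Rightarrow> real) \<Rightarrow> 'b set \<Rightarrow> ('b \<Rightarrow> 'b \<Rightarrow> real) \<Rightarrow> bool" where
  "isometric A dA B dB \<longleftrightarrow> (\<exists>f. isometry_onto f A dA B dB)"

definition homogeneous :: "'a set \<Rightarrow> ('a \<Rightarrow> 'a \<Rightarrow> real) \<Rightarrow> bool" where
  "homogeneous M d \<longleftrightarrow>
     (\<forall>F G f. F \<subseteq> M \<and> G \<subseteq> M \<and> finite F \<and> isometry_onto f F d G d \<longrightarrow>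
        (\<exists>g. isometry_onto g M d M d \<and> (\<forall>x\<in>F. g x = f x)))"

text \<open>Membership in the class U_D. Finite metric spaces are represented (up to isometry)
  on finite subsets of nat.\<close>
definition in_U :: "real set \<Rightarrow> 'a set \<Rightarrow> ('a \<Rightarrow> 'a \<Rightarrow> real) \<Rightarrow> bool" where
  "in_U D M d \<longleftrightarrow> countable M \<and> metric_on M d \<and> dist_set M d = D \<and> homogeneous M d \<and>
     (\<forall>(N::nat set) e. finite N \<and> metric_on N e \<and> dist_set N e \<subseteq> D \<longrightarrow>
        (\<exists>f. f ` N \<subseteq> M \<and> (\<forall>x\<in>N. \<forall>y\<in>N. d (f x) (f y) = e x y)))"

text \<open>D is universal iff U_D is nonempty (countable spaces may be taken on nat).\<close>
definition universal :: "real set \<Rightarrow> bool" where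
  "universal D \<longleftrightarrow> (\<exists>(M::nat set) d. in_U D M d)"

definition katetov :: "real set \<Rightarrow> 'a set \<Rightarrow> ('a \<Rightarrow> 'a \<Rightarrow> real) \<Rightarrow> 'a set \<Rightarrow> ('a \<Rightarrow> real) \<Rightarrow> bool" where
  "katetov D M d F t \<longleftrightarrow> F \<subseteq> M \<and> finite F \<and> t ` F \<subseteq> D - {0} \<and>
     (\<forall>x\<in>F. \<forall>y\<in>F. \<bar>t x - t y\<bar> \<le> d x y \<and> d x y \<le> t x + t y)"

definition orb :: "'a set \<Rightarrow> ('a \<Rightarrow> 'a \<Rightarrow> real) \<Rightarrow> 'a set \<Rightarrow> ('a \<Rightarrow> real) \<Rightarrow> 'a set" where
  "orb M d F t = {y \<in> M - F. \<forall>x\<in>F. d y x = t x}"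

definition rank :: "'a set \<Rightarrow> ('a \<Rightarrow> real) \<Rightarrow> real" where
  "rank F t = Min (t ` F)"

end

theory Submission
  imports Defs
begin

(* Let H be in U_D, t a Katetov function on the finite nonempty set F, r = rank t, and
   D_t = {n \<in> D. n \<le> 2r}.  The orbit O = orb H d F t is a subspace of H, hence countable and
   metric, and its distances are at most 2r (pass through a point x0 with t x0 = r).
   The heart of the proof is that every finite metric space N with distances in D_t embeds
   into O: gluing N to F, with every point of N at distance t x from x \<in> F, gives a finite
   metric space with distances in D (because t is Katetov and distances in N are \<le> 2 t x);
   it embeds into H by universality, and homogeneity of H moves the image of F back onto F
   pointwise, so that the image of N lands in O.
   O is homogeneous because an isometry between finite parts of O, extended by the identity
   on F, extends to an isometry of H fixing F, which maps O onto itself.  Embedding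
   equilateral spaces shows that every element of D_t is a distance of O and that O is
   infinite.  Transporting O to a subset of nat finally witnesses that D_t is universal. *)

subsection \<open>Isometries\<close>

lemma isometry_onto_comp:
  "isometry_onto f A dA B dB \<Longrightarrow> isometry_onto g B dB C dC \<Longrightarrow> isometry_onto (g \<circ> f) A dA C dC"
  unfolding isometry_onto_def by (auto intro: comp_inj_on simp: bij_betw_def)

lemma isometry_onto_inv:
  assumes "isometry_onto f A dA B dB"
  shows "isometry_onto (inv_into A f) B dB A dA"
proof -
  have f: "bij_betw f A B" and fd: "\<forall>x\<in>A. \<forall>y\<in>A. dB (f x) (f y) = dA x y"
    using assms unfolding isometry_onto_def by auto
  have "dA (inv_into A f x) (inv_into A f y) = dB x y" if "x \<in> B" "y \<in> B" for x y
  proof -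
    have "inv_into A f x \<in> A" "inv_into A f y \<in> A"
      "f (inv_into A f x) = x" "f (inv_into A f y) = y"
      using f that by (auto simp: bij_betw_def inv_into_into f_inv_into_f)
    then show ?thesis using fd by metis
  qed
  then show ?thesis using bij_betw_inv_into[OF f] unfolding isometry_onto_def by auto
qed

lemma isometry_onto_restrict:
  "isometry_onto f A dA B dB \<Longrightarrow> S \<subseteq> A \<Longrightarrow> isometry_onto f S dA (f ` S) dB"
  unfolding isometry_onto_def bij_betw_def by (auto intro: inj_on_subset)

lemma isometry_onto_transport:
  assumes "inj_on f M"
  shows "isometry_onto f M d (f ` M) (\<lambda>a b. d (inv_into M f a) (inv_into M f b))"
  using assms unfolding isometry_onto_def by (auto simp: inj_on_imp_bij_betw)

lemma metric_on_subset: "metric_on M d \<Longrightarrow> S \<subseteq> M \<Longrightarrow> metric_on S d"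
  unfolding metric_on_def by blast

lemma metric_on_isometry:
  assumes "metric_on M d" and "isometry_onto f M d N e"
  shows "metric_on N e"
proof -
  have N: "N = f ` M" and f_inj: "inj_on f M"
    and fd: "\<And>x y. x \<in> M \<Longrightarrow> y \<in> M \<Longrightarrow> e (f x) (f y) = d x y"
    using assms(2) unfolding isometry_onto_def bij_betw_def by auto
  show ?thesis unfolding metric_on_def N
  proof (intro conjI ballI)
    fix a b assume "a \<in> f ` M" "b \<in> f ` M"
    then obtain x y where "x \<in> M" "y \<in> M" "a = f x" "b = f y" by auto
    then show "e a b \<ge> 0" "e a b = 0 \<longleftrightarrow> a = b" "e a b = e b a"
      using assms(1) fd f_inj unfolding metric_on_def inj_on_def by metis+
  next
    fix a b c assume "a \<in> f ` M" "b \<in> f ` M" "c \<in> f ` M"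
    then obtain x y z where "x \<in> M" "y \<in> M" "z \<in> M" "a = f x" "b = f y" "c = f z" by auto
    then show "e a c \<le> e a b + e b c" using assms(1) fd unfolding metric_on_def by metis
  qed
qed

lemma dist_set_isometry:
  assumes "isometry_onto f M d N e"
  shows "dist_set N e = dist_set M d"
proof -
  have N: "N = f ` M" and fd: "\<And>x y. x \<in> M \<Longrightarrow> y \<in> M \<Longrightarrow> e (f x) (f y) = d x y"
    using assms unfolding isometry_onto_def bij_betw_def by auto
  show ?thesis unfolding dist_set_def N
  proof (intro set_eqI iffI)
    fix r assume "r \<in> {e a b |a b. a \<in> f ` M \<and> b \<in> f ` M}"
    then obtain x y where "x \<in> M" "y \<in> M" "r = e (f x) (f y)" by auto
    then show "r \<in> {d x y |x y. x \<in> M \<and> y \<in> M}" using fd by auto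
  next
    fix r assume "r \<in> {d x y |x y. x \<in> M \<and> y \<in> M}"
    then obtain x y where "x \<in> M" "y \<in> M" "r = e (f x) (f y)" using fd by auto
    then show "r \<in> {e a b |a b. a \<in> f ` M \<and> b \<in> f ` M}" by blast
  qed
qed

text \<open>Homogeneity is transported by conjugating with the isometry.\<close>

lemma homogeneous_isometry:
  assumes hom: "homogeneous M d" and I: "isometry_onto f M d N e"
  shows "homogeneous N e"
  unfolding homogeneous_def
proof (intro allI impI)
  fix A B h assume "A \<subseteq> N \<and> B \<subseteq> N \<and> finite A \<and> isometry_onto h A e B e"
  then have AN: "A \<subseteq> N" and BN: "B \<subseteq> N" and "finite A" and h: "isometry_onto h A e B e"
    by auto
  define f' where "f' = inv_into M f"
  have I': "isometry_onto f' N e M d" unfolding f'_def by (rule isometry_onto_inv[OF I])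
  have f'M: "f' ` N = M" and f_f': "\<And>a. a \<in> N \<Longrightarrow> f (f' a) = a"
    using I I' unfolding isometry_onto_def bij_betw_def f'_def by (auto simp: f_inv_into_f)
  have "f ` f' ` A = A" using AN f_f' by (force simp: image_image)
  then have "isometry_onto f (f' ` A) d A e"
    using isometry_onto_restrict[OF I, of "f' ` A"] AN f'M by auto
  then have "isometry_onto (f' \<circ> (h \<circ> f)) (f' ` A) d (f' ` B) d"
    using isometry_onto_comp[OF isometry_onto_comp[OF _ h] isometry_onto_restrict[OF I' BN]]
    by blast
  moreover have "f' ` A \<subseteq> M" "f' ` B \<subseteq> M" "finite (f' ` A)"
    using AN BN f'M \<open>finite A\<close> by auto
  ultimately obtain g where g: "isometry_onto g M d M d" "\<forall>x\<in>f' ` A. g x = f' (h (f x))"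
    using hom unfolding homogeneous_def by (metis comp_apply)
  have "isometry_onto (f \<circ> (g \<circ> f')) N e N e"
    by (rule isometry_onto_comp[OF isometry_onto_comp[OF I' g(1)] I])
  moreover have "(f \<circ> (g \<circ> f')) x = h x" if "x \<in> A" for x
  proof -
    have "x \<in> N" "h x \<in> N" using h that AN BN unfolding isometry_onto_def bij_betw_def by auto
    then show ?thesis using g(2) that f_f' by simp
  qed
  ultimately show "\<exists>g. isometry_onto g N e N e \<and> (\<forall>x\<in>A. g x = h x)" by blast
qed

lemma in_U_isometry:
  assumes U: "in_U D M d" and I: "isometry_onto f M d N e"
  shows "in_U D N e"
proof -
  have N: "N = f ` M" and fd: "\<forall>x\<in>M. \<forall>y\<in>M. e (f x) (f y) = d x y"
    using I unfolding isometry_onto_def bij_betw_def by auto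
  have "countable M" and "metric_on M d" and "dist_set M d = D" and "homogeneous M d"
    and embed: "\<And>(K::nat set) c. finite K \<Longrightarrow> metric_on K c \<Longrightarrow> dist_set K c \<subseteq> D \<Longrightarrow>
        \<exists>g. g ` K \<subseteq> M \<and> (\<forall>x\<in>K. \<forall>y\<in>K. d (g x) (g y) = c x y)"
    using U unfolding in_U_def by auto
  have "\<exists>g. g ` K \<subseteq> N \<and> (\<forall>x\<in>K. \<forall>y\<in>K. e (g x) (g y) = c x y)"
    if K: "finite K" "metric_on K c" "dist_set K c \<subseteq> D" for K :: "nat set" and c
  proof -
    obtain g where "g ` K \<subseteq> M" "\<forall>x\<in>K. \<forall>y\<in>K. d (g x) (g y) = c x y"
      using embed[OF K] by blast
    then show ?thesis using fd N by (intro exI[of _ "f \<circ> g"]) (auto simp: image_subset_iff)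
  qed
  moreover have "countable N" using \<open>countable M\<close> N by simp
  moreover have "metric_on N e" by (rule metric_on_isometry[OF \<open>metric_on M d\<close> I])
  moreover have "dist_set N e = D" using dist_set_isometry[OF I] \<open>dist_set M d = D\<close> by simp
  moreover have "homogeneous N e" by (rule homogeneous_isometry[OF \<open>homogeneous M d\<close> I])
  ultimately show ?thesis unfolding in_U_def by blast
qed

lemma in_U_nat_copy:
  assumes "in_U D M d"
  shows "\<exists>(N::nat set) e. in_U D N e \<and> isometric M d N e"
proof -
  let ?f = "to_nat_on M" and ?e = "\<lambda>a b. d (inv_into M (to_nat_on M) a) (inv_into M (to_nat_on M) b)"
  have "inj_on ?f M" using assms unfolding in_U_def by auto
  then have I: "isometry_onto ?f M d (?f ` M) ?e" by (rule isometry_onto_transport)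
  have "in_U D (?f ` M) ?e" by (rule in_U_isometry[OF assms I])
  with I show ?thesis unfolding isometric_def by blast
qed

lemma in_U_embed_finite:
  fixes A :: "'b set"
  assumes U: "in_U D H d" and "finite A" and "metric_on A e" and "dist_set A e \<subseteq> D"
  shows "\<exists>\<phi>. \<phi> ` A \<subseteq> H \<and> (\<forall>x\<in>A. \<forall>y\<in>A. d (\<phi> x) (\<phi> y) = e x y)"
proof -
  obtain h :: "'b \<Rightarrow> nat" where "bij_betw h A {0..<card A}"
    using ex_bij_betw_finite_nat[OF \<open>finite A\<close>] by blast
  then have h_inj: "inj_on h A" by (simp add: bij_betw_def)
  define e' where "e' = (\<lambda>a b. e (inv_into A h a) (inv_into A h b))"
  have I: "isometry_onto h A e (h ` A) e'"
    unfolding e'_def by (rule isometry_onto_transport[OF h_inj])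
  have "finite (h ` A)" using \<open>finite A\<close> by simp
  moreover have "metric_on (h ` A) e'" by (rule metric_on_isometry[OF \<open>metric_on A e\<close> I])
  moreover have "dist_set (h ` A) e' \<subseteq> D" using dist_set_isometry[OF I] assms(4) by simp
  moreover have "\<forall>(K::nat set) c. finite K \<and> metric_on K c \<and> dist_set K c \<subseteq> D \<longrightarrow>
      (\<exists>g. g ` K \<subseteq> H \<and> (\<forall>x\<in>K. \<forall>y\<in>K. d (g x) (g y) = c x y))"
    using U unfolding in_U_def by blast
  ultimately obtain f where f: "f ` h ` A \<subseteq> H" "\<forall>x\<in>h ` A. \<forall>y\<in>h ` A. d (f x) (f y) = e' x y"
    by blast
  have "\<forall>x\<in>A. \<forall>y\<in>A. d ((f \<circ> h) x) ((f \<circ> h) y) = e x y"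
    using f(2) h_inj unfolding e'_def by simp
  moreover have "(f \<circ> h) ` A \<subseteq> H" using f(1) by (simp add: image_comp)
  ultimately show ?thesis by blast
qed

subsection \<open>Gluing a finite space to the domain of a Katetov function\<close>

fun glue_dist :: "('a \<Rightarrow> 'a \<Rightarrow> real) \<Rightarrow> ('a \<Rightarrow> real) \<Rightarrow> ('b \<Rightarrow> 'b \<Rightarrow> real)
    \<Rightarrow> 'a + 'b \<Rightarrow> 'a + 'b \<Rightarrow> real" where
  "glue_dist d t e (Inl x) (Inl y) = d x y"
| "glue_dist d t e (Inl x) (Inr b) = t x"
| "glue_dist d t e (Inr a) (Inl y) = t y"
| "glue_dist d t e (Inr a) (Inr b) = e a b"

text \<open>It is a metric as soon as t is a positive Katetov function and the diameter of N is at
  most 2 t x for every x: these are exactly the triangle inequalities through F and N.\<close>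

lemma glue_metric:
  assumes dF: "metric_on F d" and eN: "metric_on N e"
    and tpos: "\<forall>x\<in>F. t x > 0"
    and kat: "\<forall>x\<in>F. \<forall>y\<in>F. \<bar>t x - t y\<bar> \<le> d x y \<and> d x y \<le> t x + t y"
    and bound: "\<forall>x\<in>F. \<forall>a\<in>N. \<forall>b\<in>N. e a b \<le> 2 * t x"
  shows "metric_on (Inl ` F \<union> Inr ` N) (glue_dist d t e)"
proof -
  have d_nonneg: "\<And>x y. x \<in> F \<Longrightarrow> y \<in> F \<Longrightarrow> d x y \<ge> 0"
    and d_zero: "\<And>x y. x \<in> F \<Longrightarrow> y \<in> F \<Longrightarrow> d x y = 0 \<longleftrightarrow> x = y"
    and d_sym: "\<And>x y. x \<in> F \<Longrightarrow> y \<in> F \<Longrightarrow> d x y = d y x"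
    and d_tri: "\<And>x y z. x \<in> F \<Longrightarrow> y \<in> F \<Longrightarrow> z \<in> F \<Longrightarrow> d x z \<le> d x y + d y z"
    using dF unfolding metric_on_def by blast+
  have e_nonneg: "\<And>a b. a \<in> N \<Longrightarrow> b \<in> N \<Longrightarrow> e a b \<ge> 0"
    and e_zero: "\<And>a b. a \<in> N \<Longrightarrow> b \<in> N \<Longrightarrow> e a b = 0 \<longleftrightarrow> a = b"
    and e_sym: "\<And>a b. a \<in> N \<Longrightarrow> b \<in> N \<Longrightarrow> e a b = e b a"
    and e_tri: "\<And>a b c. a \<in> N \<Longrightarrow> b \<in> N \<Longrightarrow> c \<in> N \<Longrightarrow> e a c \<le> e a b + e b c"
    using eN unfolding metric_on_def by blast+
  have t_lip: "t x \<le> d x y + t y" and t_lip': "t y \<le> t x + d x y"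
    if "x \<in> F" "y \<in> F" for x y
  proof -
    have "\<bar>t x - t y\<bar> \<le> d x y" using kat that by blast
    then show "t x \<le> d x y + t y" "t y \<le> t x + d x y" by (simp_all add: abs_le_iff)
  qed
  have t_sum: "\<And>x y. x \<in> F \<Longrightarrow> y \<in> F \<Longrightarrow> d x y \<le> t x + t y"
    using kat by blast
  have e_le: "\<And>x a b. x \<in> F \<Longrightarrow> a \<in> N \<Longrightarrow> b \<in> N \<Longrightarrow> e a b \<le> 2 * t x"
    using bound by blast
  have t_pos: "\<And>x. x \<in> F \<Longrightarrow> t x > 0" using tpos by blast
  show ?thesis unfolding metric_on_def
  proof (intro conjI ballI)
    fix u v assume "u \<in> Inl ` F \<union> Inr ` N" "v \<in> Inl ` F \<union> Inr ` N"
    then show "glue_dist d t e u v \<ge> 0" "glue_dist d t e u v = 0 \<longleftrightarrow> u = v"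
        "glue_dist d t e u v = glue_dist d t e v u"
      by (elim UnE imageE; simp add: d_nonneg d_zero d_sym e_nonneg e_zero e_sym t_pos
          less_imp_le less_imp_neq[THEN not_sym])+
  next
    fix u v w assume "u \<in> Inl ` F \<union> Inr ` N" "v \<in> Inl ` F \<union> Inr ` N" "w \<in> Inl ` F \<union> Inr ` N"
    then show "glue_dist d t e u w \<le> glue_dist d t e u v + glue_dist d t e v w"
      by (elim UnE imageE) (simp_all add: d_tri e_tri t_lip t_lip' t_sum e_nonneg e_le)
  qed
qed

lemma glue_dist_set:
  "dist_set (Inl ` F \<union> Inr ` N) (glue_dist d t e) \<subseteq> dist_set F d \<union> t ` F \<union> dist_set N e"
proof
  fix r assume "r \<in> dist_set (Inl ` F \<union> Inr ` N) (glue_dist d t e)"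
  then obtain u v where "u \<in> Inl ` F \<union> Inr ` N" "v \<in> Inl ` F \<union> Inr ` N"
    and "r = glue_dist d t e u v"
    unfolding dist_set_def by blast
  then show "r \<in> dist_set F d \<union> t ` F \<union> dist_set N e"
    unfolding dist_set_def by (elim UnE imageE) auto
qed

subsection \<open>Homogeneity and orbits\<close>

lemma homogeneous_move_back:
  assumes hom: "homogeneous H d" and mH: "metric_on H d" and FH: "F \<subseteq> H" and "finite F"
    and pH: "p ` F \<subseteq> H" and pd: "\<forall>x\<in>F. \<forall>y\<in>F. d (p x) (p y) = d x y"
  obtains g where "isometry_onto g H d H d" and "\<forall>x\<in>F. g (p x) = x"
proof -
  have p_inj: "inj_on p F"
  proof (rule inj_onI)
    fix x y assume xy: "x \<in> F" "y \<in> F" "p x = p y"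
    then have "d x y = d (p x) (p x)" using pd by metis
    also have "\<dots> = 0" using mH pH xy unfolding metric_on_def by auto
    finally show "x = y" using mH FH xy unfolding metric_on_def by blast
  qed
  then have "isometry_onto (inv_into F p) (p ` F) d F d"
    using pd by (intro isometry_onto_inv) (auto simp: isometry_onto_def inj_on_imp_bij_betw)
  moreover have "finite (p ` F)" using \<open>finite F\<close> by simp
  ultimately obtain g where "isometry_onto g H d H d" "\<forall>y\<in>p ` F. g y = inv_into F p y"
    using hom[unfolded homogeneous_def, rule_format, of "p ` F" F "inv_into F p"] pH FH by blast
  then show ?thesis using p_inj that by auto
qed

lemma orb_memI:
  assumes "metric_on H d" "\<forall>x\<in>F. t x > 0" "z \<in> H" "\<forall>x\<in>F. d z x = t x"
  shows "z \<in> orb H d F t"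
proof -
  have "z \<notin> F"
  proof
    assume "z \<in> F"
    then have "d z z > 0" using assms(2,4) by auto
    moreover have "d z z = 0" using assms(1,3) unfolding metric_on_def by simp
    ultimately show False by simp
  qed
  then show ?thesis using assms unfolding orb_def by auto
qed

lemma orb_dist_le:
  assumes mH: "metric_on H d" and FH: "F \<subseteq> H" and "x0 \<in> F"
    and "y \<in> orb H d F t" and "y' \<in> orb H d F t"
  shows "d y y' \<le> 2 * t x0"
proof -
  have "y \<in> H" "y' \<in> H" "x0 \<in> H" "d y x0 = t x0" "d y' x0 = t x0"
    using assms unfolding orb_def by auto
  then show ?thesis using mH unfolding metric_on_def by (metis mult_2)
qed

lemma isometry_fixing_orb_subset:
  assumes g: "isometry_onto g H d H d" and g_fix: "\<forall>x\<in>F. g x = x" and FH: "F \<subseteq> H"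
  shows "g ` orb H d F t \<subseteq> orb H d F t"
proof
  fix z assume "z \<in> g ` orb H d F t"
  then obtain y where y: "y \<in> H" "y \<notin> F" "\<forall>x\<in>F. d y x = t x" and z: "z = g y"
    unfolding orb_def by auto
  have g_inj: "inj_on g H" and gH: "g ` H = H" and gd: "\<forall>x\<in>H. \<forall>y\<in>H. d (g x) (g y) = d x y"
    using g unfolding isometry_onto_def bij_betw_def by auto
  have "z \<in> H" using y z gH by auto
  moreover have "z \<notin> F" using y z g_fix g_inj FH by (metis inj_on_def subsetD)
  moreover have "\<forall>x\<in>F. d z x = t x" using y z g_fix gd FH by (metis subsetD)
  ultimately show "z \<in> orb H d F t" unfolding orb_def by auto
qed

text \<open>Applying the previous lemma also to the inverse isometry shows that the orbit is mapped
  onto itself.\<close>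

lemma isometry_fixing_orb:
  assumes g: "isometry_onto g H d H d" and g_fix: "\<forall>x\<in>F. g x = x" and FH: "F \<subseteq> H"
  shows "isometry_onto g (orb H d F t) d (orb H d F t) d"
proof -
  define g' where "g' = inv_into H g"
  have g': "isometry_onto g' H d H d" unfolding g'_def by (rule isometry_onto_inv[OF g])
  have g_bij: "bij_betw g H H" using g unfolding isometry_onto_def by auto
  have "\<forall>x\<in>F. g' x = x"
    using g_fix FH g_bij unfolding g'_def by (metis bij_betw_inv_into_left subsetD)
  then have "g' ` orb H d F t \<subseteq> orb H d F t" by (rule isometry_fixing_orb_subset[OF g' _ FH])
  moreover have "g ` g' ` orb H d F t = orb H d F t"
    using g_bij unfolding g'_def orb_def
    by (force simp: image_image bij_betw_def f_inv_into_f)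
  ultimately have "orb H d F t \<subseteq> g ` orb H d F t" by blast
  with isometry_fixing_orb_subset[OF g g_fix FH] have "g ` orb H d F t = orb H d F t" by blast
  then show ?thesis using isometry_onto_restrict[OF g, of "orb H d F t"]
    unfolding orb_def by auto
qed

text \<open>The orbit of a function on a finite set in a homogeneous space is homogeneous: an
  isometry between finite parts of the orbit, extended by the identity on F, is an isometry
  between finite parts of H.\<close>

lemma orb_homogeneous:
  assumes hom: "homogeneous H d" and mH: "metric_on H d" and FH: "F \<subseteq> H" and "finite F"
  shows "homogeneous (orb H d F t) d"
  unfolding homogeneous_def
proof (intro allI impI)
  let ?O = "orb H d F t"
  fix A B h assume "A \<subseteq> ?O \<and> B \<subseteq> ?O \<and> finite A \<and> isometry_onto h A d B d"
  then have AO: "A \<subseteq> ?O" and BO: "B \<subseteq> ?O" and "finite A" and h: "isometry_onto h A d B d"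
    by auto
  have O_prop: "?O \<subseteq> H" "?O \<inter> F = {}" "\<And>y x. y \<in> ?O \<Longrightarrow> x \<in> F \<Longrightarrow> d y x = t x"
    unfolding orb_def by auto
  have dsym: "\<And>x y. x \<in> H \<Longrightarrow> y \<in> H \<Longrightarrow> d x y = d y x"
    using mH unfolding metric_on_def by auto
  define h' where "h' = (\<lambda>x. if x \<in> F then x else h x)"
  have hB: "h ` A = B" and hd: "\<forall>x\<in>A. \<forall>y\<in>A. d (h x) (h y) = d x y"
    using h unfolding isometry_onto_def bij_betw_def by auto
  have "bij_betw h' A B"
    using h AO O_prop(2) unfolding isometry_onto_def h'_def
    by (subst bij_betw_cong[of A _ h]) auto
  then have "bij_betw h' (A \<union> F) (B \<union> F)"
    using BO O_prop(2) by (intro bij_betw_combine) (auto simp: h'_def bij_betw_def inj_on_def)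
  moreover have "d (h' x) (h' y) = d x y" if "x \<in> A \<union> F" "y \<in> A \<union> F" for x y
  proof -
    have "h x \<in> ?O \<and> x \<in> ?O" if "x \<in> A" for x using that hB AO BO by auto
    then show ?thesis
      using that AO O_prop hd dsym FH unfolding h'_def by (auto simp: subset_iff) metis+
  qed
  ultimately have "isometry_onto h' (A \<union> F) d (B \<union> F) d" unfolding isometry_onto_def by blast
  moreover have "A \<union> F \<subseteq> H" "B \<union> F \<subseteq> H" "finite (A \<union> F)"
    using AO BO O_prop FH \<open>finite A\<close> \<open>finite F\<close> by auto
  ultimately obtain g where g: "isometry_onto g H d H d" "\<forall>x\<in>A \<union> F. g x = h' x"
    using hom unfolding homogeneous_def by blast
  have "\<forall>x\<in>F. g x = x" using g(2) unfolding h'_def by auto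
  moreover have "\<forall>x\<in>A. g x = h x" using g(2) AO O_prop(2) unfolding h'_def by auto
  ultimately show "\<exists>g. isometry_onto g ?O d ?O d \<and> (\<forall>x\<in>A. g x = h x)"
    using isometry_fixing_orb[OF g(1) _ FH] by blast
qed

lemma orb_embed:
  fixes N :: "'b set"
  assumes U: "in_U D H d" and K: "katetov D H d F t" and tpos: "\<forall>x\<in>F. t x > 0"
    and N: "finite N" "metric_on N e" "dist_set N e \<subseteq> D"
    and bound: "\<forall>x\<in>F. \<forall>a\<in>N. \<forall>b\<in>N. e a b \<le> 2 * t x"
  shows "\<exists>f. f ` N \<subseteq> orb H d F t \<and> (\<forall>a\<in>N. \<forall>b\<in>N. d (f a) (f b) = e a b)"
proof -
  have mH: "metric_on H d" and dsH: "dist_set H d = D" and hom: "homogeneous H d"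
    using U unfolding in_U_def by auto
  have FH: "F \<subseteq> H" and "finite F" and tD: "t ` F \<subseteq> D - {0}"
    and kat: "\<forall>x\<in>F. \<forall>y\<in>F. \<bar>t x - t y\<bar> \<le> d x y \<and> d x y \<le> t x + t y"
    using K unfolding katetov_def by auto
  let ?A = "Inl ` F \<union> Inr ` N" and ?c = "glue_dist d t e"
  have "dist_set F d \<subseteq> D" using FH dsH unfolding dist_set_def by blast
  then have A_dist: "dist_set ?A ?c \<subseteq> D" using glue_dist_set[of F N d t e] tD N(3) by blast
  have A_metric: "metric_on ?A ?c"
    by (rule glue_metric[OF metric_on_subset[OF mH FH] N(2) tpos kat bound])
  have A_finite: "finite ?A" using \<open>finite F\<close> N(1) by simp
  obtain \<phi> where \<phi>: "\<phi> ` ?A \<subseteq> H" "\<forall>u\<in>?A. \<forall>v\<in>?A. d (\<phi> u) (\<phi> v) = ?c u v"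
    using in_U_embed_finite[OF U A_finite A_metric A_dist] by meson
  have \<phi>_Inl: "\<phi> (Inl x) \<in> H" if "x \<in> F" for x using \<phi>(1) that by blast
  have \<phi>_Inr: "\<phi> (Inr a) \<in> H" if "a \<in> N" for a using \<phi>(1) that by blast
  have "(\<lambda>x. \<phi> (Inl x)) ` F \<subseteq> H" using \<phi>_Inl by blast
  moreover have "\<forall>x\<in>F. \<forall>y\<in>F. d (\<phi> (Inl x)) (\<phi> (Inl y)) = d x y" using \<phi>(2) by simp
  ultimately obtain g where g: "isometry_onto g H d H d" "\<forall>x\<in>F. g (\<phi> (Inl x)) = x"
    using homogeneous_move_back[OF hom mH FH \<open>finite F\<close>, of "\<lambda>x. \<phi> (Inl x)"] by blast
  have gH: "\<And>y. y \<in> H \<Longrightarrow> g y \<in> H" and gd: "\<forall>x\<in>H. \<forall>y\<in>H. d (g x) (g y) = d x y"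
    using g(1) unfolding isometry_onto_def bij_betw_def by auto
  define f where "f = g \<circ> \<phi> \<circ> Inr"
  have "f ` N \<subseteq> orb H d F t"
  proof
    fix y assume "y \<in> f ` N"
    then obtain a where a: "a \<in> N" and y: "y = g (\<phi> (Inr a))" unfolding f_def by auto
    have "d y x = t x" if x: "x \<in> F" for x
    proof -
      have "d y x = d (g (\<phi> (Inr a))) (g (\<phi> (Inl x)))" using g(2) x y by simp
      also have "\<dots> = d (\<phi> (Inr a)) (\<phi> (Inl x))" using gd \<phi>_Inr[OF a] \<phi>_Inl[OF x] by blast
      also have "\<dots> = t x" using \<phi>(2) a x by simp
      finally show ?thesis .
    qed
    then show "y \<in> orb H d F t" using orb_memI[OF mH tpos] gH[OF \<phi>_Inr[OF a]] y by blast
  qed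
  moreover have "d (f a) (f b) = e a b" if "a \<in> N" "b \<in> N" for a b
    using gd \<phi>_Inr \<phi>(2) that unfolding f_def by simp
  ultimately show ?thesis by blast
qed

subsection \<open>Equilateral spaces\<close>

text \<open>The metric on nat in which all distinct points are at distance c; embedding its finite
  pieces into the orbit realizes distances and shows infinitude.\<close>

definition equilateral :: "real \<Rightarrow> nat \<Rightarrow> nat \<Rightarrow> real" where
  "equilateral c a b = (if a = b then 0 else c)"

lemma equilateral_metric: "c > 0 \<Longrightarrow> metric_on S (equilateral c)"
  unfolding metric_on_def equilateral_def by auto

lemma equilateral_dist_set: "dist_set S (equilateral c) \<subseteq> {0, c}"
  unfolding dist_set_def equilateral_def by auto

lemma infinite_if_equilateral:
  assumes mM: "metric_on M d" and "c \<noteq> 0"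
    and eq: "\<And>k. \<exists>f. f ` {..<k} \<subseteq> M \<and>
      (\<forall>a\<in>{..<k}. \<forall>b\<in>{..<k}. d (f a) (f b) = equilateral c a b)"
  shows "infinite M"
proof
  assume "finite M"
  obtain f where f: "f ` {..<Suc (card M)} \<subseteq> M"
    "\<forall>a\<in>{..<Suc (card M)}. \<forall>b\<in>{..<Suc (card M)}. d (f a) (f b) = equilateral c a b"
    using eq by blast
  have "inj_on f {..<Suc (card M)}"
  proof (rule inj_onI)
    fix a b assume ab: "a \<in> {..<Suc (card M)}" "b \<in> {..<Suc (card M)}" "f a = f b"
    have "equilateral c a b = d (f a) (f b)" using f(2) ab(1,2) by simp
    also have "\<dots> = 0" using f(1) mM ab unfolding metric_on_def by auto
    finally show "a = b" using \<open>c \<noteq> 0\<close> unfolding equilateral_def by (simp split: if_splits)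
  qed
  then have "card (f ` {..<Suc (card M)}) = Suc (card M)" by (simp add: card_image)
  moreover have "card (f ` {..<Suc (card M)}) \<le> card M" using card_mono[OF \<open>finite M\<close> f(1)] .
  ultimately show False by simp
qed

subsection \<open>The orbit is a universal homogeneous space\<close>

lemma orb_in_U:
  assumes U: "in_U D H d" and Dpos: "\<forall>x\<in>D. x \<ge> 0" and K: "katetov D H d F t"
    and "F \<noteq> {}"
  shows "in_U {n \<in> D. n \<le> 2 * rank F t} (orb H d F t) d \<and> infinite (orb H d F t)"
proof -
  define Orb where "Orb = orb H d F t"
  define r where "r = rank F t"
  define Dt where "Dt = {n \<in> D. n \<le> 2 * r}"
  have cH: "countable H" and mH: "metric_on H d" and dsH: "dist_set H d = D"
    and hom: "homogeneous H d"
    using U unfolding in_U_def by auto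
  have FH: "F \<subseteq> H" and "finite F" and tD: "t ` F \<subseteq> D - {0}"
    using K unfolding katetov_def by auto
  have tpos: "\<forall>x\<in>F. t x > 0" using tD Dpos by force
  have "r \<in> t ` F" unfolding r_def rank_def using \<open>finite F\<close> \<open>F \<noteq> {}\<close> by simp
  then obtain x0 where x0: "x0 \<in> F" "t x0 = r" by auto
  have r_le: "\<forall>x\<in>F. r \<le> t x" unfolding r_def rank_def using \<open>finite F\<close> by simp
  have r_pos: "r > 0" and r_Dt: "r \<in> Dt" using tpos tD x0 unfolding Dt_def by auto
  have OH: "Orb \<subseteq> H" unfolding Orb_def orb_def by auto
  have mO: "metric_on Orb d" using metric_on_subset[OF mH OH] .
  (* Finite spaces with distances in Dt have diameter at most 2r \<le> 2 t x, so they embed into the orbit. *)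
  have embed: "\<exists>f. f ` N \<subseteq> Orb \<and> (\<forall>a\<in>N. \<forall>b\<in>N. d (f a) (f b) = e a b)"
    if N: "finite N" "metric_on N e" "dist_set N e \<subseteq> Dt" for N :: "nat set" and e
  proof -
    have "e a b \<le> 2 * t x" if "x \<in> F" "a \<in> N" "b \<in> N" for x a b
    proof -
      have "e a b \<in> Dt" using N(3) that(2,3) unfolding dist_set_def by blast
      then show ?thesis using r_le that(1) unfolding Dt_def by force
    qed
    moreover have "dist_set N e \<subseteq> D" using N(3) unfolding Dt_def by blast
    ultimately show ?thesis using orb_embed[OF U K tpos N(1,2)] unfolding Orb_def by blast
  qed
  have "d x0 x0 = 0" using mH FH x0(1) unfolding metric_on_def by blast
  then have "0 \<in> D" using dsH FH x0(1) unfolding dist_set_def by force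
  then have "0 \<in> Dt" using r_pos unfolding Dt_def by simp
  have equi: "\<exists>f. f ` {..<k} \<subseteq> Orb \<and>
      (\<forall>a\<in>{..<k}. \<forall>b\<in>{..<k}. d (f a) (f b) = equilateral c a b)"
    if c: "c \<in> Dt" "c > 0" for c k
  proof -
    have "dist_set {..<k} (equilateral c) \<subseteq> Dt"
      using equilateral_dist_set[of "{..<k}" c] c(1) \<open>0 \<in> Dt\<close> by blast
    then show ?thesis using embed[OF _ equilateral_metric[OF c(2)]] by blast
  qed
  have "dist_set Orb d \<subseteq> Dt"
  proof
    fix n assume "n \<in> dist_set Orb d"
    then obtain y y' where "y \<in> Orb" "y' \<in> Orb" "n = d y y'" unfolding dist_set_def by blast
    moreover have "d y y' \<le> 2 * r" if "y \<in> Orb" "y' \<in> Orb" for y y'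
      using orb_dist_le[OF mH FH x0(1)] that x0(2) unfolding Orb_def by blast
    moreover have "d y y' \<in> D" if "y \<in> Orb" "y' \<in> Orb" for y y'
      using that OH dsH unfolding dist_set_def by blast
    ultimately show "n \<in> Dt" unfolding Dt_def by blast
  qed
  moreover have "n \<in> dist_set Orb d" if n_Dt: "n \<in> Dt" for n
  proof (cases "n = 0")
    case True
    obtain f where f: "f ` {..<1::nat} \<subseteq> Orb" "d (f 0) (f 0) = equilateral r 0 0"
      using equi[OF r_Dt r_pos, of 1] by fastforce
    have "f 0 \<in> f ` {..<1}" by (rule imageI) simp
    then have "f 0 \<in> Orb" "d (f 0) (f 0) = n" using f True unfolding equilateral_def by auto
    then show ?thesis unfolding dist_set_def by blast
  next
    case False
    then have "n > 0" using n_Dt Dpos unfolding Dt_def by force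
    obtain f where f: "f ` {..<2::nat} \<subseteq> Orb" "d (f 0) (f 1) = equilateral n 0 1"
      using equi[OF n_Dt \<open>n > 0\<close>, of 2] by fastforce
    have "f 0 \<in> f ` {..<2}" "f 1 \<in> f ` {..<2}" by (rule imageI, simp)+
    then have "f 0 \<in> Orb" "f 1 \<in> Orb" "d (f 0) (f 1) = n" using f unfolding equilateral_def by auto
    then show ?thesis unfolding dist_set_def by blast
  qed
  ultimately have "dist_set Orb d = Dt" by blast
  moreover have "countable Orb" using countable_subset[OF OH cH] .
  moreover have "homogeneous Orb d"
    unfolding Orb_def by (rule orb_homogeneous[OF hom mH FH \<open>finite F\<close>])
  moreover have "\<forall>(N::nat set) e. finite N \<and> metric_on N e \<and> dist_set N e \<subseteq> Dt \<longrightarrow>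
      (\<exists>f. f ` N \<subseteq> Orb \<and> (\<forall>a\<in>N. \<forall>b\<in>N. d (f a) (f b) = e a b))"
    using embed by blast
  ultimately have "in_U Dt Orb d" using mO unfolding in_U_def by blast
  moreover have "infinite Orb"
    using infinite_if_equilateral[OF mO _ equi[OF r_Dt r_pos]] r_pos by simp
  ultimately show ?thesis unfolding Orb_def Dt_def r_def by blast
qed

theorem theorem2p2:
  fixes D :: "real set" and H :: "'a set" and d :: "'a \<Rightarrow> 'a \<Rightarrow> real"
    and F :: "'a set" and t :: "'a \<Rightarrow> real"
  assumes "finite D" and "0 \<in> D" and "\<forall>x\<in>D. x \<ge> 0"
    and "universal D"
    and "in_U D H d"
    and "katetov D H d F t" and "F \<noteq> {}"
  shows "universal {n \<in> D. n \<le> 2 * rank F t}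
       \<and> (\<exists>(N::nat set) e. in_U {n \<in> D. n \<le> 2 * rank F t} N e \<and>
            isometric (orb H d F t) d N e)
       \<and> infinite (orb H d F t)"
proof -
  have orb_U: "in_U {n \<in> D. n \<le> 2 * rank F t} (orb H d F t) d"
    and orb_inf: "infinite (orb H d F t)"
    using orb_in_U[OF assms(5,3,6,7)] by auto
  obtain N :: "nat set" and e where "in_U {n \<in> D. n \<le> 2 * rank F t} N e"
      and "isometric (orb H d F t) d N e"
    using in_U_nat_copy[OF orb_U] by blast
  then show ?thesis using orb_inf unfolding universal_def by blast
qed

end
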